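(* Let $P \in S$ have degree $n > 0$ in $x$, and suppose its leading coefficient $p_n \in K[y]$ satisfies $0 < \deg_y(p_n) \leq n$. Then $C_S(P) = K[P]$.
   Context: Standing conventions: $K$ is a field, $R = K[y]$, $\sigma$ is a $K$-algebra endomorphism of $R$ with $\deg_y(\sigma(y)) > 1$, and $\delta$ is a $K$-linear $\sigma$-derivation of $R$ ($\delta(ab) = \sigma(a)\delta(b) + \delta(a)b$). $S = R[x;\sigma,\delta]$ is the Ore extension (polynomials $\sum r_i x^i$, $r_i\in R$, with $xr = \sigma(r)x + \delta(r)$). Degree of an element of $S$ means degree in $x$; its leading coefficient is the coefficient in $K[y]$ of the highest power of $x$. $C_S(P)$ is the centralizer of $P$ in $S$, and $K[P] = \{\sum_i c_i P^i : c_i \in K\}$. *)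

theory Defs
  imports "HOL-Computational_Algebra.Polynomial"
begin

text \<open>R = K[y] is represented by the type 'a poly (variable y); elements of the
Ore extension S = R[x; sigma, delta] are represented by their coefficient lists
in x, i.e. by the type 'a poly poly, with the twisted multiplication below.\<close>

definition K_alg_endo :: "('a::field poly \<Rightarrow> 'a poly) \<Rightarrow> bool" where
  "K_alg_endo \<sigma> \<longleftrightarrow>
     (\<forall>a b. \<sigma> (a + b) = \<sigma> a + \<sigma> b) \<and>
     (\<forall>a b. \<sigma> (a * b) = \<sigma> a * \<sigma> b) \<and>
     (\<forall>c a. \<sigma> (smult c a) = smult c (\<sigma> a)) \<and>
     \<sigma> 1 = 1"

definition sigma_derivation :: "('a::field poly \<Rightarrow> 'a poly) \<Rightarrow> ('a poly \<Rightarrow> 'a poly) \<Rightarrow> bool" where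
  "sigma_derivation \<sigma> \<delta> \<longleftrightarrow>
     (\<forall>a b. \<delta> (a + b) = \<delta> a + \<delta> b) \<and>
     (\<forall>c a. \<delta> (smult c a) = smult c (\<delta> a)) \<and>
     (\<forall>a b. \<delta> (a * b) = \<sigma> a * \<delta> b + \<delta> a * b)"

text \<open>Left multiplication by x:  x * (sum r_k x^k) = sum (sigma(r_k) x^(k+1) + delta(r_k) x^k).\<close>
definition ore_left_x :: "('a::field poly \<Rightarrow> 'a poly) \<Rightarrow> ('a poly \<Rightarrow> 'a poly) \<Rightarrow> 'a poly poly \<Rightarrow> 'a poly poly" where
  "ore_left_x \<sigma> \<delta> p = pCons 0 (map_poly \<sigma> p) + map_poly \<delta> p"

definition ore_mult :: "('a::field poly \<Rightarrow> 'a poly) \<Rightarrow> ('a poly \<Rightarrow> 'a poly) \<Rightarrow> 'a poly poly \<Rightarrow> 'a poly poly \<Rightarrow> 'a poly poly" where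
  "ore_mult \<sigma> \<delta> A B = (\<Sum>i\<le>degree A. smult (coeff A i) ((ore_left_x \<sigma> \<delta> ^^ i) B))"

primrec ore_pow :: "('a::field poly \<Rightarrow> 'a poly) \<Rightarrow> ('a poly \<Rightarrow> 'a poly) \<Rightarrow> 'a poly poly \<Rightarrow> nat \<Rightarrow> 'a poly poly" where
  "ore_pow \<sigma> \<delta> P 0 = 1"
| "ore_pow \<sigma> \<delta> P (Suc n) = ore_mult \<sigma> \<delta> P (ore_pow \<sigma> \<delta> P n)"

definition ore_centralizer :: "('a::field poly \<Rightarrow> 'a poly) \<Rightarrow> ('a poly \<Rightarrow> 'a poly) \<Rightarrow> 'a poly poly \<Rightarrow> 'a poly poly set" where
  "ore_centralizer \<sigma> \<delta> P = {Q. ore_mult \<sigma> \<delta> Q P = ore_mult \<sigma> \<delta> P Q}"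

definition ore_K_poly_in :: "('a::field poly \<Rightarrow> 'a poly) \<Rightarrow> ('a poly \<Rightarrow> 'a poly) \<Rightarrow> 'a poly poly \<Rightarrow> 'a poly poly set" where
  "ore_K_poly_in \<sigma> \<delta> P = {Q. \<exists>(c::nat \<Rightarrow> 'a) m. Q = (\<Sum>i\<le>m. smult [:c i:] (ore_pow \<sigma> \<delta> P i))}"

end

theory Submission imports Defs begin

text \<open>Let \<open>Q\<close> of degree \<open>m\<close> commute with \<open>P\<close> of degree \<open>n\<close>, and let \<open>q\<close>, \<open>p\<close> be their leading
  coefficients. Comparing leading coefficients in \<open>QP = PQ\<close> gives \<open>q \<sigma>\<^sup>m(p) = p \<sigma>\<^sup>n(q)\<close>.
  Since \<open>\<sigma>\<close> multiplies \<open>y\<close>-degrees by \<open>d = deg \<sigma>(y) \<ge> 2\<close>, taking \<open>y\<close>-degrees yields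
  \<open>deg q (d\<^sup>n - 1) = deg p (d\<^sup>m - 1)\<close>, and \<open>0 < deg p \<le> n\<close> forces \<open>n\<close> to divide \<open>m\<close>.
  The equation for \<open>q\<close> determines \<open>q\<close> up to a scalar, and \<open>P\<^sup>k\<close> with \<open>k = m/n\<close>
  provides a solution; so subtracting a scalar multiple of \<open>P\<^sup>k\<close> from \<open>Q\<close> lowers its degree,
  and induction on the degree shows \<open>Q \<in> K[P]\<close>.\<close>

lemma double_le_two_power: "2 * s \<le> (2::nat) ^ s"
proof (induction s)
  case (Suc s)
  then show ?case by (cases s) auto
qed simp

lemma power_diff_one_dvd_power_mod:
  fixes D a b :: int
  assumes "b * (D ^ n - 1) = a * (D ^ m - 1)"
  shows "D ^ n - 1 dvd a * (D ^ (m mod n) - 1)"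
proof -
  define r where "r = m mod n"
  have "D ^ n - 1 dvd (D ^ n) ^ (m div n) - 1"
    by (simp add: power_diff_1_eq)
  then have "D ^ n - 1 dvd a * D ^ r * ((D ^ n) ^ (m div n) - 1)"
    by simp
  moreover have "a * (D ^ r - 1) = b * (D ^ n - 1) - a * D ^ r * ((D ^ n) ^ (m div n) - 1)"
  proof -
    have "D ^ m = D ^ r * (D ^ n) ^ (m div n)"
      by (metis r_def div_mult_mod_eq power_add power_mult mult.commute)
    then show ?thesis using assms by (simp add: algebra_simps)
  qed
  ultimately show ?thesis unfolding r_def by (metis dvd_diff dvd_triv_right)
qed

lemma power_diff_one_not_dvd_small_multiple:
  fixes D a :: int
  assumes D: "2 \<le> D" and r: "0 < r" "r < n" and a: "0 < a" "a \<le> int n"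
  shows "\<not> D ^ n - 1 dvd a * (D ^ r - 1)"
proof
  assume "D ^ n - 1 dvd a * (D ^ r - 1)"
  then obtain t where t: "a * (D ^ r - 1) = (D ^ n - 1) * t" by (elim dvdE)
  have Dr: "2 \<le> D ^ r" using power_increasing[of 1 r D] D r by simp
  have Drn: "D ^ r < D ^ n" using power_strict_increasing[of r n D] D r by simp
  have "0 < a * (D ^ r - 1)" using a Dr by simp
  then have "0 < (D ^ n - 1) * t" using t by simp
  then have t_pos: "0 < t" using Drn Dr by (simp add: zero_less_mult_iff)
  have "a * (D ^ r - 1) < a * (D ^ n - 1)" using a Drn by simp
  then have "(D ^ n - 1) * t < (D ^ n - 1) * a" using t by (simp add: mult.commute)
  then have t_less: "t < a" using Drn Dr by simp
  \<comment> \<open>\<open>D ^ r\<close> divides the positive \<open>a - t < a\<close>, and the cofactor bounds \<open>D ^ (n - r)\<close> by \<open>a\<close>\<close>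
  have split: "a - t = D ^ r * (a - t * D ^ (n - r))"
    using t r by (simp add: algebra_simps flip: power_add)
  then have "0 < D ^ r * (a - t * D ^ (n - r))" using t_less by simp
  then have cof: "0 < a - t * D ^ (n - r)"
    by (rule zero_less_mult_pos) (use Dr in simp)
  have "D ^ r * 1 \<le> D ^ r * (a - t * D ^ (n - r))"
    by (rule mult_left_mono) (use cof Dr in auto)
  then have "D ^ r < a" using split t_pos by simp
  moreover have "1 * D ^ (n - r) \<le> t * D ^ (n - r)"
    by (rule mult_right_mono) (use t_pos D in auto)
  then have "D ^ (n - r) < a" using cof by simp
  ultimately have "D ^ max r (n - r) < a" by (simp add: max_def)
  moreover have "int n \<le> 2 ^ max r (n - r)"
  proof -
    have "n \<le> 2 * max r (n - r)" using r by (simp add: max_def, arith)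
    also have "\<dots> \<le> 2 ^ max r (n - r)" by (rule double_le_two_power)
    finally show ?thesis by (metis of_nat_le_iff of_nat_numeral of_nat_power)
  qed
  moreover have "(2::int) ^ max r (n - r) \<le> D ^ max r (n - r)" using D by (simp add: power_mono)
  ultimately show False using a by simp
qed

lemma dvd_of_mult_power_diff_one_eq:
  fixes D a b :: int
  assumes D: "2 \<le> D" and n: "0 < n" and a: "0 < a" "a \<le> int n"
    and eq: "b * (D ^ n - 1) = a * (D ^ m - 1)"
  shows "n dvd m"
proof (rule ccontr)
  assume "\<not> n dvd m"
  then have "0 < m mod n" "m mod n < n"
    using n by (simp_all add: mod_greater_zero_iff_not_dvd)
  then show False
    using power_diff_one_not_dvd_small_multiple[OF D _ _ a]
      power_diff_one_dvd_power_mod[OF eq] by blast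
qed

lemma smult_sum_right: "smult c (\<Sum>i\<in>S. f i) = (\<Sum>i\<in>S. smult c (f i))"
  by (rule poly_eqI) (simp add: coeff_sum sum_distrib_left)

locale ore_extension =
  fixes \<sigma> \<delta> :: "'a::field poly \<Rightarrow> 'a poly"
  assumes endo: "K_alg_endo \<sigma>" and der: "sigma_derivation \<sigma> \<delta>"
    and degree_sigma_y: "degree (\<sigma> [:0, 1:]) > 1"
begin

abbreviation xmul where "xmul \<equiv> ore_left_x \<sigma> \<delta>"
abbreviation omult (infixl "\<star>" 70) where "omult \<equiv> ore_mult \<sigma> \<delta>"
abbreviation opow where "opow \<equiv> ore_pow \<sigma> \<delta>"

definition sigma_degree where "sigma_degree = degree (\<sigma> [:0, 1:])"

lemma sigma_add: "\<sigma> (a + b) = \<sigma> a + \<sigma> b"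
  and sigma_mult: "\<sigma> (a * b) = \<sigma> a * \<sigma> b"
  and sigma_smult: "\<sigma> (smult c a) = smult c (\<sigma> a)"
  and sigma_1: "\<sigma> 1 = 1"
  using endo by (simp_all add: K_alg_endo_def)

lemma sigma_0: "\<sigma> 0 = 0"
  using sigma_add[of 0 0] by (metis add_cancel_right_right)

lemma sigma_diff: "\<sigma> (a - b) = \<sigma> a - \<sigma> b"
  using sigma_add[of "a - b" b] by (simp add: eq_diff_eq)

lemma sigma_const: "\<sigma> [:c:] = [:c:]"
  using sigma_smult[of c 1] sigma_1 by simp

lemma delta_add: "\<delta> (a + b) = \<delta> a + \<delta> b"
  and delta_mult: "\<delta> (a * b) = \<sigma> a * \<delta> b + \<delta> a * b"
  and delta_smult: "\<delta> (smult c a) = smult c (\<delta> a)"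
  using der by (simp_all add: sigma_derivation_def)

lemma delta_0: "\<delta> 0 = 0"
  using delta_add[of 0 0] by (metis add_cancel_right_right)

lemma delta_1: "\<delta> 1 = 0"
proof -
  have "\<delta> 1 + \<delta> 1 = \<delta> 1 + 0" using delta_mult[of 1 1] sigma_1 by simp
  then show ?thesis by (simp only: add_left_cancel)
qed

lemma delta_const: "\<delta> [:c:] = 0"
  using delta_smult[of c 1] delta_1 by simp

lemma sigma_eq_pcompose: "\<sigma> f = pcompose f (\<sigma> [:0, 1:])"
proof (induction f)
  case (pCons a p)
  have "\<sigma> (pCons a p) = \<sigma> ([:a:] + [:0, 1:] * p)" by simp
  also have "\<dots> = [:a:] + \<sigma> [:0, 1:] * \<sigma> p"
    by (simp only: sigma_add sigma_mult sigma_const)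
  finally show ?case using pCons.IH by (simp add: pcompose_pCons)
qed (simp add: sigma_0)

lemma degree_sigma: "degree (\<sigma> f) = degree f * sigma_degree"
  by (simp add: sigma_eq_pcompose[of f] degree_pcompose sigma_degree_def)

lemma sigma_eq_0_iff: "\<sigma> f = 0 \<longleftrightarrow> f = 0"
  using degree_sigma_y by (simp add: sigma_eq_pcompose[of f] pcompose_eq_0_iff)

lemma sigma_degree_ge_2: "2 \<le> sigma_degree"
  using degree_sigma_y by (simp add: sigma_degree_def)

lemma degree_sigma_iter: "degree ((\<sigma> ^^ k) f) = degree f * sigma_degree ^ k"
  by (induction k) (auto simp: degree_sigma)

lemma sigma_iter_eq_0_iff: "(\<sigma> ^^ k) f = 0 \<longleftrightarrow> f = 0"
  by (induction k) (auto simp: sigma_eq_0_iff)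

lemma sigma_iter_diff: "(\<sigma> ^^ k) (a - b) = (\<sigma> ^^ k) a - (\<sigma> ^^ k) b"
  by (induction k) (auto simp: sigma_diff)

lemma sigma_iter_smult: "(\<sigma> ^^ k) (smult c a) = smult c ((\<sigma> ^^ k) a)"
  by (induction k) (auto simp: sigma_smult)

lemma coeff_xmul:
  "coeff (xmul C) k = (case k of 0 \<Rightarrow> 0 | Suc j \<Rightarrow> \<sigma> (coeff C j)) + \<delta> (coeff C k)"
  by (cases k) (simp_all add: ore_left_x_def coeff_map_poly sigma_0 delta_0)

lemma xmul_0: "xmul 0 = 0"
  by (rule poly_eqI) (simp add: coeff_xmul sigma_0 delta_0 split: nat.split)

lemma xmul_add: "xmul (B + C) = xmul B + xmul C"
  by (rule poly_eqI) (simp add: coeff_xmul sigma_add delta_add split: nat.split)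

lemma xmul_smult: "xmul (smult b C) = smult (\<sigma> b) (xmul C) + smult (\<delta> b) C"
  by (rule poly_eqI) (simp add: coeff_xmul sigma_mult delta_mult algebra_simps split: nat.split)

lemma xmul_smult_const: "xmul (smult [:c:] C) = smult [:c:] (xmul C)"
  by (simp add: xmul_smult sigma_const delta_const)

lemma xmul_pCons: "xmul (pCons b B) = pCons (\<delta> b) ([:\<sigma> b:] + xmul B)"
  by (rule poly_eqI) (simp add: coeff_xmul coeff_pCons split: nat.split)

lemma xmul_monom_1: "xmul (monom 1 i) = monom 1 (Suc i)"
  by (rule poly_eqI)
    (auto simp: coeff_xmul coeff_monom sigma_1 sigma_0 delta_0 delta_1 split: nat.split)

lemma xmul_iter_add: "(xmul ^^ k) (B + C) = (xmul ^^ k) B + (xmul ^^ k) C"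
  by (induction k) (auto simp: xmul_add)

lemma xmul_iter_smult_const: "(xmul ^^ k) (smult [:c:] B) = smult [:c:] ((xmul ^^ k) B)"
  by (induction k) (auto simp: xmul_smult_const)

lemma xmul_iter_1: "(xmul ^^ i) 1 = monom 1 i"
proof (induction i)
  case 0
  show ?case by (simp add: monom_0 one_pCons)
next
  case (Suc i)
  then show ?case by (simp add: xmul_monom_1)
qed

lemma degree_xmul:
  assumes "B \<noteq> 0"
  shows "degree (xmul B) = Suc (degree B)"
    and "lead_coeff (xmul B) = \<sigma> (lead_coeff B)"
proof -
  have top: "coeff (xmul B) (Suc (degree B)) = \<sigma> (lead_coeff B)"
    by (simp add: coeff_xmul coeff_eq_0 delta_0)
  have "degree (xmul B) \<le> Suc (degree B)"
    by (rule degree_le) (auto simp: coeff_xmul coeff_eq_0 sigma_0 delta_0 split: nat.split)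
  moreover have "Suc (degree B) \<le> degree (xmul B)"
    by (rule le_degree) (simp add: top sigma_eq_0_iff assms)
  ultimately show deg: "degree (xmul B) = Suc (degree B)" by simp
  show "lead_coeff (xmul B) = \<sigma> (lead_coeff B)" by (simp add: deg top)
qed

lemma degree_xmul_iter:
  assumes "B \<noteq> 0"
  shows "(xmul ^^ k) B \<noteq> 0 \<and> degree ((xmul ^^ k) B) = degree B + k
    \<and> lead_coeff ((xmul ^^ k) B) = (\<sigma> ^^ k) (lead_coeff B)"
proof (induction k)
  case (Suc k)
  then have "(xmul ^^ k) B \<noteq> 0" by simp
  then show ?case
    using Suc degree_xmul[of "(xmul ^^ k) B"] by (auto simp: sigma_eq_0_iff)
qed (simp add: assms)

lemma ore_mult_eq_sum:
  assumes "degree A \<le> N"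
  shows "A \<star> B = (\<Sum>i\<le>N. smult (coeff A i) ((xmul ^^ i) B))"
  unfolding ore_mult_def
  by (rule sum.mono_neutral_right[symmetric]) (use assms in \<open>auto simp: coeff_eq_0\<close>)

lemma ore_mult_pCons_left: "pCons a A \<star> B = smult a B + A \<star> xmul B"
proof -
  have "pCons a A \<star> B = (\<Sum>i\<le>Suc (degree A). smult (coeff (pCons a A) i) ((xmul ^^ i) B))"
    by (rule ore_mult_eq_sum) (simp add: degree_pCons_le)
  also have "\<dots> = smult a B + (\<Sum>i\<le>degree A. smult (coeff A i) ((xmul ^^ i) (xmul B)))"
    by (subst sum.atMost_Suc_shift) (simp add: funpow_Suc_right del: funpow.simps)
  also have "\<dots> = smult a B + A \<star> xmul B" by (simp add: ore_mult_def)
  finally show ?thesis .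
qed

lemma ore_mult_0_left: "0 \<star> B = 0"
  by (simp add: ore_mult_def)

lemma ore_mult_const_left: "[:c:] \<star> B = smult c B"
  by (simp add: ore_mult_def)

lemma ore_mult_1_left: "1 \<star> B = B"
  by (metis ore_mult_const_left one_pCons smult_1_left)

lemma ore_mult_1_right: "A \<star> 1 = A"
  by (simp add: ore_mult_def xmul_iter_1 smult_monom poly_as_sum_of_monoms)

lemma ore_mult_add_left: "(A + A') \<star> B = A \<star> B + A' \<star> B"
proof -
  let ?N = "max (degree A) (degree A')"
  have "(A + A') \<star> B = (\<Sum>i\<le>?N. smult (coeff (A + A') i) ((xmul ^^ i) B))"
    by (rule ore_mult_eq_sum) (simp add: degree_add_le)
  also have "\<dots> = (\<Sum>i\<le>?N. smult (coeff A i) ((xmul ^^ i) B))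
      + (\<Sum>i\<le>?N. smult (coeff A' i) ((xmul ^^ i) B))"
    by (simp add: smult_add_left sum.distrib)
  also have "\<dots> = A \<star> B + A' \<star> B"
    by (simp add: ore_mult_eq_sum[symmetric])
  finally show ?thesis .
qed

lemma ore_mult_diff_left: "(A - A') \<star> B = A \<star> B - A' \<star> B"
  using ore_mult_add_left[of "A - A'" A' B] by simp

lemma ore_mult_smult_left: "smult c A \<star> B = smult c (A \<star> B)"
proof -
  have "smult c A \<star> B = (\<Sum>i\<le>degree A. smult (coeff (smult c A) i) ((xmul ^^ i) B))"
    by (rule ore_mult_eq_sum) (simp add: degree_smult_le)
  also have "\<dots> = smult c (A \<star> B)"
    by (simp add: ore_mult_def smult_sum_right)
  finally show ?thesis .
qed

lemma ore_mult_add_right: "A \<star> (B + C) = A \<star> B + A \<star> C"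
  by (simp add: ore_mult_def xmul_iter_add smult_add_right sum.distrib)

lemma ore_mult_diff_right: "A \<star> (B - C) = A \<star> B - A \<star> C"
  using ore_mult_add_right[of A "B - C" C] by simp

lemma ore_mult_smult_const_right: "A \<star> smult [:c:] B = smult [:c:] (A \<star> B)"
  by (simp add: ore_mult_def xmul_iter_smult_const smult_sum_right mult.commute)

lemma xmul_ore_mult: "xmul B \<star> C = xmul (B \<star> C)"
proof (induction B arbitrary: C)
  case 0
  then show ?case by (simp add: xmul_0 ore_mult_0_left)
next
  case (pCons b B)
  have "xmul (pCons b B) \<star> C = smult (\<delta> b) C + ([:\<sigma> b:] + xmul B) \<star> xmul C"
    by (simp add: xmul_pCons ore_mult_pCons_left)
  also have "\<dots> = smult (\<delta> b) C + smult (\<sigma> b) (xmul C) + xmul (B \<star> xmul C)"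
    by (simp add: ore_mult_add_left ore_mult_const_left pCons.IH)
  also have "\<dots> = xmul (pCons b B \<star> C)"
    by (simp add: ore_mult_pCons_left xmul_add xmul_smult)
  finally show ?case .
qed

lemma ore_mult_assoc: "(A \<star> B) \<star> C = A \<star> (B \<star> C)"
  by (induction A arbitrary: B)
    (simp_all add: ore_mult_0_left ore_mult_pCons_left ore_mult_add_left
      ore_mult_smult_left xmul_ore_mult)

lemma ore_mult_sum_const_left:
  "(\<Sum>i\<le>(M::nat). smult [:c i:] (F i)) \<star> B = (\<Sum>i\<le>M. smult [:c i:] (F i \<star> B))"
  by (induction M) (simp_all add: ore_mult_add_left ore_mult_smult_left)

lemma ore_mult_sum_const_right:
  "A \<star> (\<Sum>i\<le>(M::nat). smult [:c i:] (F i)) = (\<Sum>i\<le>M. smult [:c i:] (A \<star> F i))"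
  by (induction M) (simp_all add: ore_mult_add_right ore_mult_smult_const_right)

lemma coeff_ore_mult: "coeff (A \<star> B) k = (\<Sum>i\<le>degree A. coeff A i * coeff ((xmul ^^ i) B) k)"
  by (simp add: ore_mult_def coeff_sum)

lemma coeff_ore_mult_degree:
  assumes "B \<noteq> 0"
  shows "coeff (A \<star> B) (degree A + degree B) = lead_coeff A * (\<sigma> ^^ degree A) (lead_coeff B)"
proof -
  let ?t = "\<lambda>i. coeff A i * coeff ((xmul ^^ i) B) (degree A + degree B)"
  have "coeff (A \<star> B) (degree A + degree B)
      = ?t (degree A) + (\<Sum>i\<in>{..degree A} - {degree A}. ?t i)"
    unfolding coeff_ore_mult by (rule sum.remove) auto
  also have "(\<Sum>i\<in>{..degree A} - {degree A}. ?t i) = 0"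
    by (rule sum.neutral) (auto simp: coeff_eq_0 degree_xmul_iter[OF assms])
  finally show ?thesis
    using degree_xmul_iter[OF assms, of "degree A"] by (auto simp: add.commute)
qed

lemma degree_ore_mult:
  assumes "A \<noteq> 0" "B \<noteq> 0"
  shows "degree (A \<star> B) = degree A + degree B"
proof (rule antisym)
  show "degree (A \<star> B) \<le> degree A + degree B"
    by (rule degree_le)
      (auto simp: coeff_ore_mult coeff_eq_0 degree_xmul_iter[OF assms(2)] intro!: sum.neutral)
  show "degree A + degree B \<le> degree (A \<star> B)"
    by (rule le_degree) (simp add: coeff_ore_mult_degree assms sigma_iter_eq_0_iff)
qed

lemma lead_coeff_ore_mult:
  assumes "A \<noteq> 0" "B \<noteq> 0"
  shows "lead_coeff (A \<star> B) = lead_coeff A * (\<sigma> ^^ degree A) (lead_coeff B)"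
  by (simp add: degree_ore_mult assms coeff_ore_mult_degree)

lemma ore_mult_nonzero: "A \<noteq> 0 \<Longrightarrow> B \<noteq> 0 \<Longrightarrow> A \<star> B \<noteq> 0"
  by (metis lead_coeff_ore_mult leading_coeff_0_iff mult_eq_0_iff sigma_iter_eq_0_iff)

lemma ore_pow_commute: "P \<star> opow P k = opow P k \<star> P"
proof (induction k)
  case 0
  then show ?case by (simp add: ore_mult_1_left ore_mult_1_right)
next
  case (Suc k)
  have "P \<star> opow P (Suc k) = P \<star> (opow P k \<star> P)" by (simp add: Suc)
  also have "\<dots> = opow P (Suc k) \<star> P" by (simp add: ore_mult_assoc)
  finally show ?case .
qed

lemma degree_ore_pow:
  assumes "P \<noteq> 0"
  shows "opow P k \<noteq> 0 \<and> degree (opow P k) = k * degree P"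
  by (induction k) (simp_all add: assms ore_mult_nonzero degree_ore_mult)

lemma ore_K_poly_in_subset_centralizer: "ore_K_poly_in \<sigma> \<delta> P \<subseteq> ore_centralizer \<sigma> \<delta> P"
  by (auto simp: ore_K_poly_in_def ore_centralizer_def ore_mult_sum_const_left
      ore_mult_sum_const_right ore_pow_commute)

lemma zero_in_ore_K_poly_in: "0 \<in> ore_K_poly_in \<sigma> \<delta> P"
  unfolding ore_K_poly_in_def by (rule CollectI, rule exI[of _ "\<lambda>_. 0"], rule exI[of _ 0]) simp

lemma add_smult_ore_pow_in_ore_K_poly_in:
  assumes "Q \<in> ore_K_poly_in \<sigma> \<delta> P"
  shows "Q + smult [:c:] (opow P k) \<in> ore_K_poly_in \<sigma> \<delta> P"
proof -
  from assms obtain c' M where Q: "Q = (\<Sum>i\<le>M. smult [:c' i:] (opow P i))"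
    by (auto simp: ore_K_poly_in_def)
  define N where "N = max M k"
  define c'' where "c'' i = (if i \<le> M then c' i else 0) + (if i = k then c else 0)" for i
  have term_split: "smult [:c'' i:] (opow P i) = smult [:if i \<le> M then c' i else 0:] (opow P i)
      + (if i = k then smult [:c:] (opow P k) else 0)" for i
    by (cases "i = k") (simp_all add: c''_def smult_add_left[symmetric])
  have "(\<Sum>i\<le>N. smult [:c'' i:] (opow P i)) =
      (\<Sum>i\<le>N. smult [:if i \<le> M then c' i else 0:] (opow P i)) +
      (\<Sum>i\<le>N. (if i = k then smult [:c:] (opow P k) else 0))"
    by (simp only: term_split sum.distrib)
  also have "(\<Sum>i\<le>N. smult [:if i \<le> M then c' i else 0:] (opow P i)) = Q"
    unfolding Q by (rule sum.mono_neutral_cong_right) (auto simp: N_def)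
  also have "(\<Sum>i\<le>N. (if i = k then smult [:c:] (opow P k) else 0)) = smult [:c:] (opow P k)"
    by (simp add: N_def)
  finally have "Q + smult [:c:] (opow P k) = (\<Sum>i\<le>N. smult [:c'' i:] (opow P i))" ..
  then show ?thesis
    unfolding ore_K_poly_in_def by (intro CollectI exI)
qed

lemma diff_smult_ore_pow_in_centralizer:
  assumes "Q \<in> ore_centralizer \<sigma> \<delta> P"
  shows "Q - smult [:c:] (opow P k) \<in> ore_centralizer \<sigma> \<delta> P"
  using assms by (simp add: ore_centralizer_def ore_mult_diff_left ore_mult_diff_right
      ore_mult_smult_left ore_mult_smult_const_right ore_pow_commute)

lemma lead_coeff_centralizer_eq:
  assumes "Q \<in> ore_centralizer \<sigma> \<delta> P" "Q \<noteq> 0" "P \<noteq> 0"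
  shows "lead_coeff Q * (\<sigma> ^^ degree Q) (lead_coeff P)
    = lead_coeff P * (\<sigma> ^^ degree P) (lead_coeff Q)"
  using assms lead_coeff_ore_mult[of Q P] lead_coeff_ore_mult[of P Q]
  by (simp add: ore_centralizer_def)

lemma degree_twisted_eq:
  assumes "q * (\<sigma> ^^ m) p = p * (\<sigma> ^^ n) q" "q \<noteq> 0" "p \<noteq> 0"
  shows "int (degree q) * (int sigma_degree ^ n - 1) = int (degree p) * (int sigma_degree ^ m - 1)"
proof -
  have "degree (q * (\<sigma> ^^ m) p) = degree (p * (\<sigma> ^^ n) q)" using assms(1) by simp
  then have "degree q + degree p * sigma_degree ^ m = degree p + degree q * sigma_degree ^ n"
    using assms(2,3) by (simp add: degree_mult_eq sigma_iter_eq_0_iff degree_sigma_iter)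
  then show ?thesis by (simp add: algebra_simps flip: of_nat_power of_nat_mult of_nat_add)
qed

lemma degree_eq_of_twisted_eq:
  assumes "q1 * (\<sigma> ^^ m) p = p * (\<sigma> ^^ n) q1" "q1 \<noteq> 0"
    and "q2 * (\<sigma> ^^ m) p = p * (\<sigma> ^^ n) q2" "q2 \<noteq> 0"
    and "p \<noteq> 0" "0 < n"
  shows "degree q1 = degree q2"
proof -
  have "1 < sigma_degree ^ n" using sigma_degree_ge_2 assms(6) by (intro one_less_power) auto
  then have "0 < int sigma_degree ^ n - 1" by (simp flip: of_nat_power)
  moreover have "int (degree q1) * (int sigma_degree ^ n - 1)
      = int (degree q2) * (int sigma_degree ^ n - 1)"
    using degree_twisted_eq[OF assms(1,2,5)] degree_twisted_eq[OF assms(3,4,5)] by simp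
  ultimately show ?thesis by simp
qed

text \<open>The equation is \<open>K\<close>-linear in \<open>q\<close> and all its nonzero solutions have the same degree,
  so the combination \<open>r\<close> below, whose coefficient in that degree vanishes, must be zero.\<close>
lemma twisted_eq_unique:
  assumes q1: "q1 * (\<sigma> ^^ m) p = p * (\<sigma> ^^ n) q1"
    and q2: "q2 * (\<sigma> ^^ m) p = p * (\<sigma> ^^ n) q2" "q2 \<noteq> 0"
    and "p \<noteq> 0" "0 < n"
  shows "\<exists>c. q1 = smult c q2"
proof (cases "q1 = 0")
  case False
  define r where "r = q1 - smult (lead_coeff q1 / lead_coeff q2) q2"
  have "r * (\<sigma> ^^ m) p = p * (\<sigma> ^^ n) r"
    using q1 q2 by (simp add: r_def sigma_iter_diff sigma_iter_smult algebra_simps)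
  moreover have "degree q1 = degree q2"
    using degree_eq_of_twisted_eq[OF q1 False q2 assms(4,5)] .
  then have "coeff r (degree q2) = 0"
    using q2(2) by (simp add: r_def)
  ultimately have "r = 0"
    using degree_eq_of_twisted_eq[OF _ _ q2 assms(4,5), of r] leading_coeff_0_iff by metis
  then show ?thesis unfolding r_def by auto
qed simp

lemma ore_pow_in_centralizer: "opow P k \<in> ore_centralizer \<sigma> \<delta> P"
  by (simp add: ore_centralizer_def ore_pow_commute)

lemma centralizer_lead_coeff_eq_smult_ore_pow:
  assumes n: "0 < degree P"
    and p: "0 < degree (lead_coeff P)" "degree (lead_coeff P) \<le> degree P"
    and Q: "Q \<in> ore_centralizer \<sigma> \<delta> P" "Q \<noteq> 0"
  obtains k c where "degree Q = k * degree P" "lead_coeff Q = smult c (lead_coeff (opow P k))"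
proof -
  have P0: "P \<noteq> 0" using n by auto
  then have p0: "lead_coeff P \<noteq> 0" by simp
  have eQ: "lead_coeff Q * (\<sigma> ^^ degree Q) (lead_coeff P)
      = lead_coeff P * (\<sigma> ^^ degree P) (lead_coeff Q)"
    by (rule lead_coeff_centralizer_eq[OF Q P0])
  have "degree P dvd degree Q"
  proof (rule dvd_of_mult_power_diff_one_eq)
    show "2 \<le> int sigma_degree" using sigma_degree_ge_2 by simp
    show "int (degree (lead_coeff Q)) * (int sigma_degree ^ degree P - 1)
        = int (degree (lead_coeff P)) * (int sigma_degree ^ degree Q - 1)"
      using degree_twisted_eq[OF eQ _ p0] Q(2) by simp
  qed (use n p in auto)
  then obtain k where k: "degree Q = k * degree P" by (metis dvd_def mult.commute)
  have R: "opow P k \<noteq> 0" "degree (opow P k) = degree Q"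
    using degree_ore_pow[OF P0, of k] k by auto
  have eR: "lead_coeff (opow P k) * (\<sigma> ^^ degree Q) (lead_coeff P)
      = lead_coeff P * (\<sigma> ^^ degree P) (lead_coeff (opow P k))"
    using lead_coeff_centralizer_eq[OF ore_pow_in_centralizer R(1) P0] R(2) by simp
  obtain c where "lead_coeff Q = smult c (lead_coeff (opow P k))"
    using twisted_eq_unique[OF eQ eR _ p0 n] R(1) by auto
  with k show ?thesis by (rule that)
qed

lemma centralizer_subset_ore_K_poly_in:
  assumes n: "0 < degree P"
    and p: "0 < degree (lead_coeff P)" "degree (lead_coeff P) \<le> degree P"
  shows "Q \<in> ore_centralizer \<sigma> \<delta> P \<Longrightarrow> Q \<in> ore_K_poly_in \<sigma> \<delta> P"
proof (induction "degree Q" arbitrary: Q rule: less_induct)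
  case less
  show ?case
  proof (cases "Q = 0")
    case True
    then show ?thesis using zero_in_ore_K_poly_in by simp
  next
    case False
    obtain k c where k: "degree Q = k * degree P"
      and c: "lead_coeff Q = smult c (lead_coeff (opow P k))"
      using centralizer_lead_coeff_eq_smult_ore_pow[OF n p less.prems False] .
    have "P \<noteq> 0" using n by auto
    then have R: "opow P k \<noteq> 0" "degree (opow P k) = degree Q"
      using degree_ore_pow[of P k] k by auto
    define Q' where "Q' = Q - smult [:c:] (opow P k)"
    have "degree Q' \<le> degree Q"
      unfolding Q'_def using R degree_smult_le[of "[:c:]" "opow P k"]
      by (intro degree_diff_le) auto
    moreover have "coeff Q' (degree Q) = 0"
      using c R by (simp add: Q'_def)
    ultimately have "Q' = 0 \<or> degree Q' < degree Q"
      by (metis le_neq_implies_less leading_coeff_0_iff)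
    moreover have "Q' \<in> ore_centralizer \<sigma> \<delta> P"
      unfolding Q'_def by (rule diff_smult_ore_pow_in_centralizer[OF less.prems])
    ultimately have "Q' \<in> ore_K_poly_in \<sigma> \<delta> P"
      using less.hyps zero_in_ore_K_poly_in by blast
    then show ?thesis
      using add_smult_ore_pow_in_ore_K_poly_in[of Q' P c k] by (simp add: Q'_def)
  qed
qed

end

theorem proposition5p6:
  fixes \<sigma> \<delta> :: "'a::field poly \<Rightarrow> 'a poly" and P :: "'a poly poly"
  assumes "K_alg_endo \<sigma>"
    and "degree (\<sigma> [:0, 1:]) > 1"
    and "sigma_derivation \<sigma> \<delta>"
    and "degree P > 0"
    and "0 < degree (lead_coeff P)"
    and "degree (lead_coeff P) \<le> degree P"
  shows "ore_centralizer \<sigma> \<delta> P = ore_K_poly_in \<sigma> \<delta> P"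
proof -
  interpret ore_extension \<sigma> \<delta> using assms(1-3) by unfold_locales
  show ?thesis
    using ore_K_poly_in_subset_centralizer centralizer_subset_ore_K_poly_in[OF assms(4-6)]
    by blast
qed

end
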